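(* Let $R\in\mathbb N$, let $I=\{n\in\mathbb Z : 1\leqslant n\leqslant R\}$, and let $\lambda_n\in\mathbb R$ ($n\in I$) satisfy $$|\lambda_n-\lambda_m|\geqslant \gamma>\sqrt{\tfrac{1}{3}+\tfrac{\pi^2}{12}}\quad\text{for all } n,m\in I \text{ with } n\neq m.$$ Then there exist constants $c_1,c_2>0$, depending only on $\gamma$ (and not on the coefficients), such that for all $a_n\in\mathbb C$ ($n\in I$), the function $f(t)=\sum_{n\in I}a_n\operatorname{sinc}(t-\lambda_n)$ satisfies $$c_1\sum_{n\in I}|a_n|^2\leqslant E_f\leqslant c_2\sum_{n\in I}|a_n|^2.$$
   Context: The sinc function is $\operatorname{sinc}(\alpha)=\frac{\sin(\pi\alpha)}{\pi\alpha}$ for $\alpha\neq 0$ and $\operatorname{sinc}(0)=1$. The energy of a signal $f:\mathbb R\to\mathbb C$ is $E_f=\int_{-\infty}^{\infty}|f(t)|^2\,dt$. *)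

theory Defs
  imports "HOL-Analysis.Analysis"
begin

definition sinc :: "real \<Rightarrow> real" where
  "sinc x = (if x = 0 then 1 else sin (pi * x) / (pi * x))"

definition energy :: "(real \<Rightarrow> complex) \<Rightarrow> real" where
  "energy f = (\<integral>t. (cmod (f t))\<^sup>2 \<partial>lborel)"

end

(*
  The energy of f is the Hermitian form sum_{n,m} a_n conj(a_m) sinc(lambda_n - lambda_m), because
  translates of sinc satisfy  int sinc(t - a) sinc(t - b) dt = sinc(a - b).  Writing
  sinc x = int_{-1/2}^{1/2} cos(2 pi x xi) d xi  turns this form into the integral over [-1/2, 1/2] of
  the nonnegative function |sum_n a_n exp(2 pi i lambda_n xi)|^2.  The windows cos(pi xi) <= 1 on
  [-1/2, 1/2] and 1 <= 2 cos(pi xi / 2) (nonnegative on [-1, 1]) therefore squeeze the energy between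
  the forms of the kernels  K_B(x) = int_{-B}^{B} cos(pi xi / (2B)) cos(2 pi x xi) d xi  for B = 1/2
  and B = 1.  Explicitly K_B(x) = 4B cos(2 pi B x) / (pi (1 - 16 B^2 x^2)), so K_B(0) = 4B/pi while
  |K_B(x)| <= 2 / (pi (4x^2 - 1)) for |x| >= 1.  For gamma-separated frequencies Schur's test bounds the
  off-diagonal part by 2/(pi gamma^2) times sum |a_n|^2, since the k-th nearest frequency on either
  side is at distance at least k gamma.  This gives the constants 2/pi - 2/(pi gamma^2) and
  8/pi + 4/(pi gamma^2); only gamma > 1 is needed, which the hypothesis implies.
*)

theory Submission
  imports Defs "HOL-Probability.Sinc_Integral" "HOL-Real_Asymp.Real_Asymp"
begin

hide_const (open) Sinc_Integral.sinc

lemma sinc_eq_Sinc: "sinc x = Sinc_Integral.sinc (pi * x)"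
  by (simp add: sinc_def)

lemma sin_pi_eq_sinc: "sin (pi * x) = pi * x * sinc x"
  by (simp add: sinc_def)

lemma sinc_minus [simp]: "sinc (- x) = sinc x"
  by (simp add: sinc_def)

lemma sinc_zero [simp]: "sinc 0 = 1"
  by (simp add: sinc_def)

lemma continuous_at_sinc: "isCont sinc x"
  unfolding sinc_eq_Sinc[abs_def] by (intro continuous_intros isCont_o2[OF _ isCont_sinc])

lemma continuous_on_sinc_compose [continuous_intros]:
  "continuous_on S f \<Longrightarrow> continuous_on S (\<lambda>x. sinc (f x))"
  by (rule continuous_on_compose2[of UNIV sinc])
     (auto intro: continuous_at_imp_continuous_on continuous_at_sinc)

lemma sinc_measurable [measurable]: "sinc \<in> borel_measurable borel"
  by (intro borel_measurable_continuous_onI continuous_at_imp_continuous_on ballI continuous_at_sinc)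

lemma abs_sinc_le_1: "\<bar>sinc x\<bar> \<le> 1"
proof (cases "x = 0")
  case False
  then show ?thesis
    using abs_sin_x_le_abs_x[of "pi * x"] by (simp add: sinc_def abs_divide divide_le_eq_1)
qed simp

lemma abs_sinc_le_inverse: "x \<noteq> 0 \<Longrightarrow> \<bar>sinc x\<bar> \<le> 1 / (pi * \<bar>x\<bar>)"
  by (simp add: sinc_def abs_divide abs_mult divide_right_mono)

lemma sinc_sq_le: "(sinc x)\<^sup>2 \<le> 2 / (1 + x\<^sup>2)"
proof (cases "\<bar>x\<bar> \<le> 1")
  case True
  then have "(sinc x)\<^sup>2 \<le> 1" and "x\<^sup>2 \<le> 1"
    using abs_sinc_le_1[of x] by (simp_all add: abs_square_le_1)
  moreover have "1 \<le> 2 / (1 + x\<^sup>2)"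
    using \<open>x\<^sup>2 \<le> 1\<close> by (simp add: le_divide_eq add_pos_nonneg)
  ultimately show ?thesis by linarith
next
  case False
  then have "x\<^sup>2 \<ge> 1" "x \<noteq> 0" by (auto simp: abs_square_le_1[symmetric] abs_le_square_iff)
  have "(sinc x)\<^sup>2 \<le> (1 / (pi * \<bar>x\<bar>))\<^sup>2"
    using abs_sinc_le_inverse[OF \<open>x \<noteq> 0\<close>] by (metis abs_ge_zero power2_abs power_mono)
  also have "\<dots> = 1 / (pi\<^sup>2 * x\<^sup>2)" by (simp add: power_divide power_mult_distrib)
  also have "\<dots> \<le> 2 / (1 + x\<^sup>2)"
  proof -
    have "1 \<le> pi\<^sup>2" using pi_ge_two one_le_power[of pi 2] by simp
    then have "1 + x\<^sup>2 \<le> 2 * (pi\<^sup>2 * x\<^sup>2)"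
      using \<open>x\<^sup>2 \<ge> 1\<close> mult_right_mono[of 1 "pi\<^sup>2" "x\<^sup>2"] by simp
    moreover have "0 < pi\<^sup>2 * x\<^sup>2" using \<open>x \<noteq> 0\<close> by simp
    ultimately show ?thesis by (simp add: divide_simps add_pos_nonneg)
  qed
  finally show ?thesis .
qed

lemma integrable_inverse_1_plus_square_shift:
  "integrable lborel (\<lambda>x::real. inverse (1 + (x - a)\<^sup>2))"
  using lborel_integrable_real_affine_iff[of 1 "\<lambda>x. inverse (1 + x\<^sup>2)" "-a"]
    integrable_inverse_1_plus_square
  by (simp add: set_integrable_def)

lemma integrable_sinc_shift_mult: "integrable lborel (\<lambda>t. sinc (t - a) * sinc (t - b))"
proof (rule Bochner_Integration.integrable_bound)
  show "integrable lborel (\<lambda>t. inverse (1 + (t - a)\<^sup>2) + inverse (1 + (t - b)\<^sup>2))"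
    by (intro Bochner_Integration.integrable_add integrable_inverse_1_plus_square_shift)
  show "AE t in lborel. norm (sinc (t - a) * sinc (t - b))
          \<le> norm (inverse (1 + (t - a)\<^sup>2) + inverse (1 + (t - b)\<^sup>2))"
  proof (intro AE_I2)
    fix t
    have "norm (sinc (t - a) * sinc (t - b)) \<le> ((sinc (t - a))\<^sup>2 + (sinc (t - b))\<^sup>2) / 2"
      using sum_squares_bound[of "\<bar>sinc (t - a)\<bar>" "\<bar>sinc (t - b)\<bar>"] by (simp add: abs_mult)
    also have "\<dots> \<le> inverse (1 + (t - a)\<^sup>2) + inverse (1 + (t - b)\<^sup>2)"
    proof -
      have "(sinc (t - c))\<^sup>2 \<le> 2 * inverse (1 + (t - c)\<^sup>2)" for c
        using sinc_sq_le[of "t - c"] by (simp add: divide_inverse)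
      from this[of a] this[of b] show ?thesis by (simp add: field_simps)
    qed
    also have "\<dots> = norm (inverse (1 + (t - a)\<^sup>2) + inverse (1 + (t - b)\<^sup>2))"
      unfolding real_norm_def by (intro abs_of_nonneg[symmetric] add_nonneg_nonneg) auto
    finally show "norm (sinc (t - a) * sinc (t - b))
          \<le> norm (inverse (1 + (t - a)\<^sup>2) + inverse (1 + (t - b)\<^sup>2))" .
  qed
qed measurable

lemma tendsto_integral_symmetric_interval:
  fixes g :: "real \<Rightarrow> real"
  assumes g: "integrable lborel g"
  shows "((\<lambda>T. integral {-T..T} g) \<longlongrightarrow> (\<integral>x. g x \<partial>lborel)) at_top"
proof -
  have si: "set_integrable lborel {-T..T} g" for T
    unfolding set_integrable_def by (intro integrable_mult_indicator g) auto
  have "integral {-T..T} g = (\<integral>x. indicator {-T..T} x *\<^sub>R g x \<partial>lborel)" for T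
    using set_borel_integral_eq_integral(2)[OF si] by (simp add: set_lebesgue_integral_def)
  moreover have "((\<lambda>T. \<integral>x. indicator {-T..T} x *\<^sub>R g x \<partial>lborel) \<longlongrightarrow> (\<integral>x. g x \<partial>lborel)) at_top"
  proof (rule integral_dominated_convergence_at_top[where w="\<lambda>x. norm (g x)"])
    show "AE x in lborel. ((\<lambda>T. indicator {-T..T} x *\<^sub>R g x) \<longlongrightarrow> g x) at_top"
    proof (intro AE_I2 tendsto_eventually)
      fix x
      show "\<forall>\<^sub>F T in at_top. indicator {-T..T} x *\<^sub>R g x = g x"
        using eventually_ge_at_top[of "\<bar>x\<bar>"] by eventually_elim (auto simp: indicator_def)
    qed
    show "\<forall>\<^sub>F T in at_top. AE x in lborel. norm (indicator {-T..T} x *\<^sub>R g x) \<le> norm (g x)"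
      by (intro always_eventually allI AE_I2) (auto simp: indicator_def)
  qed (use g in auto)
  ultimately show ?thesis by simp
qed

lemma integral_symmetric_odd:
  fixes f :: "real \<Rightarrow> real"
  assumes "\<And>x. f (- x) = - f x"
  shows "integral {-a..a} f = 0"
proof -
  have "integral {-a..a} f = integral {-a..a} (\<lambda>x. f (- x))"
    using Henstock_Kurzweil_Integration.integral_reflect_real[of a "-a" f] by simp
  also have "\<dots> = - integral {-a..a} f"
    by (simp add: assms integral_neg)
  finally show ?thesis by simp
qed

lemma tendsto_integral_symmetric_shift_primitive:
  fixes G g :: "real \<Rightarrow> real"
  assumes "finite S" and "continuous_on UNIV G"
    and "\<And>x. x \<notin> S \<Longrightarrow> (G has_real_derivative g x) (at x)"
    and "(G \<longlongrightarrow> A) at_top" and "(G \<longlongrightarrow> B) at_bot"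
  shows "((\<lambda>T. integral {-T..T} (\<lambda>t. g (t - c))) \<longlongrightarrow> A - B) at_top"
proof -
  have primitive: "integral {-T..T} (\<lambda>t. g (t - c)) = G (T - c) - G (- T - c)" if "0 \<le> T" for T
  proof (rule integral_unique, rule fundamental_theorem_of_calculus_interior_strong)
    show "finite ((\<lambda>s. s + c) ` S)" using assms(1) by simp
    show "continuous_on {-T..T} (\<lambda>t. G (t - c))"
      by (rule continuous_on_compose2[OF assms(2)]) (auto intro!: continuous_intros)
    fix x assume "x \<in> {-T<..<T} - (\<lambda>s. s + c) ` S"
    then have "x - c \<notin> S" by force
    have "((\<lambda>t. G (t - c)) has_real_derivative g (x - c) * 1) (at x)"
      by (rule DERIV_chain2[where f = G and g = "\<lambda>t. t - c", OF assms(3)[OF \<open>x - c \<notin> S\<close>]])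
         (auto intro!: derivative_eq_intros)
    then show "((\<lambda>t. G (t - c)) has_vector_derivative g (x - c)) (at x)"
      by (simp add: has_real_derivative_iff_has_vector_derivative)
  qed (use that in auto)
  have "((\<lambda>T. G (T - c) - G (- T - c)) \<longlongrightarrow> A - B) at_top"
  proof (intro tendsto_diff)
    show "((\<lambda>T. G (T - c)) \<longlongrightarrow> A) at_top"
      by (rule filterlim_compose[OF assms(4)]) real_asymp
    show "((\<lambda>T. G (- T - c)) \<longlongrightarrow> B) at_top"
      by (rule filterlim_compose[OF assms(5)]) real_asymp
  qed
  moreover have "\<forall>\<^sub>F T in at_top. G (T - c) - G (- T - c) = integral {-T..T} (\<lambda>t. g (t - c))"
    using eventually_ge_at_top[of 0] by eventually_elim (simp add: primitive)
  ultimately show ?thesis by (rule Lim_transform_eventually)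
qed

section \<open>Orthogonality of translated sinc functions\<close>

definition sin_sinc :: "real \<Rightarrow> real" where
  "sin_sinc x = sin (pi * x) * sinc x"

definition sinc_double_primitive :: "real \<Rightarrow> real" where
  "sinc_double_primitive x = Si (2 * pi * x) / (2 * pi)"

lemma sinc_double: "sinc (2 * x) = cos (pi * x) * sinc x"
proof (cases "x = 0")
  case False
  then show ?thesis
    using sin_double[of "pi * x"] by (simp add: sinc_def field_simps mult.commute mult.left_commute)
qed simp

lemma sin_sinc_minus: "sin_sinc (- x) = - sin_sinc x"
  by (simp add: sin_sinc_def)

lemma sin_sinc_eq: "sin_sinc x = (sin (pi * x))\<^sup>2 / (pi * x)"
  by (simp add: sin_sinc_def sinc_def power2_eq_square)

lemma continuous_on_sin_sinc_compose [continuous_intros]: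
  fixes f :: "real \<Rightarrow> real"
  assumes "continuous_on S f"
  shows "continuous_on S (\<lambda>x. sin_sinc (f x))"
  unfolding sin_sinc_def by (auto intro!: continuous_intros assms)

lemma abs_sin_sinc_le: "x \<noteq> 0 \<Longrightarrow> \<bar>sin_sinc x\<bar> \<le> 1 / (pi * \<bar>x\<bar>)"
  using mult_mono[OF abs_sin_le_one[of "pi * x"] abs_sinc_le_inverse[of x]]
  by (simp add: sin_sinc_def abs_mult)

lemma sin_sinc_at_top: "(sin_sinc \<longlongrightarrow> 0) at_top"
proof (rule Lim_null_comparison)
  show "\<forall>\<^sub>F x in at_top. norm (sin_sinc x) \<le> 1 / (pi * x)"
    using eventually_gt_at_top[of 0]
  proof eventually_elim
    case (elim x)
    then show ?case using abs_sin_sinc_le[of x] by simp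
  qed
qed real_asymp

lemma sin_sinc_at_bot: "(sin_sinc \<longlongrightarrow> 0) at_bot"
  using tendsto_minus[OF sin_sinc_at_top]
  by (simp add: filterlim_at_bot_mirror sin_sinc_minus)

lemma has_real_derivative_sinc_double_primitive:
  "(sinc_double_primitive has_real_derivative sinc (2 * x)) (at x)"
proof -
  have "((\<lambda>x. Si (2 * pi * x)) has_real_derivative Sinc_Integral.sinc (2 * pi * x) * (2 * pi)) (at x)"
    by (rule DERIV_chain2[OF DERIV_Si]) (auto intro!: derivative_eq_intros)
  then show ?thesis
    unfolding sinc_double_primitive_def[abs_def] sinc_eq_Sinc
    by (auto dest: DERIV_cdivide[where c = "2 * pi"] simp: mult_ac)
qed

lemma continuous_on_sinc_double_primitive: "continuous_on S sinc_double_primitive"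
  using DERIV_isCont[OF has_real_derivative_sinc_double_primitive]
  by (intro continuous_at_imp_continuous_on) blast

lemma sinc_double_primitive_at_top: "(sinc_double_primitive \<longlongrightarrow> 1/4) at_top"
proof -
  have "((\<lambda>x. Si (2 * pi * x)) \<longlongrightarrow> pi/2) at_top"
    by (rule filterlim_compose[OF Si_at_top]) real_asymp
  then have "((\<lambda>x. Si (2 * pi * x) / (2 * pi)) \<longlongrightarrow> (pi/2) / (2 * pi)) at_top"
    by (intro tendsto_divide) auto
  then show ?thesis by (simp add: sinc_double_primitive_def[abs_def])
qed

lemma sinc_double_primitive_at_bot: "(sinc_double_primitive \<longlongrightarrow> -1/4) at_bot"
proof -
  have odd: "sinc_double_primitive (- x) = - sinc_double_primitive x" if "0 \<le> x" for x
    using Si_neg[of "2 * pi * x"] that by (simp add: sinc_double_primitive_def)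
  have "\<forall>\<^sub>F x in at_top. - sinc_double_primitive x = sinc_double_primitive (- x)"
    using eventually_ge_at_top[of 0] by eventually_elim (simp add: odd)
  then show ?thesis
    using tendsto_minus[OF sinc_double_primitive_at_top]
    by (simp add: filterlim_at_bot_mirror tendsto_cong)
qed

lemma tendsto_integral_sinc_double_shift:
  "((\<lambda>T. integral {-T..T} (\<lambda>t. sinc (2 * (t - c)))) \<longlongrightarrow> 1/2) at_top"
  using tendsto_integral_symmetric_shift_primitive[OF finite.emptyI continuous_on_sinc_double_primitive
      has_real_derivative_sinc_double_primitive sinc_double_primitive_at_top sinc_double_primitive_at_bot]
  by simp

lemma tendsto_integral_sinc_sq_shift:
  "((\<lambda>T. integral {-T..T} (\<lambda>t. sinc (t - c) * sinc (t - c))) \<longlongrightarrow> 1) at_top"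
proof -
  define G where "G x = 2 * sinc_double_primitive x - sin_sinc x / pi" for x
  have "(G has_real_derivative sinc x * sinc x) (at x)" if "x \<notin> {0}" for x
  proof -
    define D where "D = (2 * sin (pi * x) * (cos (pi * x) * pi) * (pi * x) - (sin (pi * x))\<^sup>2 * pi) / (pi * x)\<^sup>2"
    have "((\<lambda>x. (sin (pi * x))\<^sup>2 / (pi * x)) has_real_derivative D) (at x)"
      unfolding D_def using that by (auto intro!: derivative_eq_intros simp: power2_eq_square)
    then have "(G has_real_derivative 2 * sinc (2 * x) - D / pi) (at x)"
      unfolding G_def[abs_def] sin_sinc_eq
      by (intro DERIV_diff DERIV_cmult DERIV_cdivide has_real_derivative_sinc_double_primitive)
    moreover have "2 * sinc (2 * x) - D / pi = sinc x * sinc x"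
      unfolding D_def sinc_double using that by (simp add: sinc_def field_simps power2_eq_square)
    ultimately show ?thesis by simp
  qed
  moreover have "continuous_on UNIV G"
    unfolding G_def by (intro continuous_intros continuous_on_sinc_double_primitive) auto
  moreover have "(G \<longlongrightarrow> 2 * (1/4) - 0 / pi) at_top" "(G \<longlongrightarrow> 2 * (-1/4) - 0 / pi) at_bot"
    unfolding G_def[abs_def]
    by (intro tendsto_intros sinc_double_primitive_at_top sinc_double_primitive_at_bot
        sin_sinc_at_top sin_sinc_at_bot; simp)+
  ultimately show ?thesis
    using tendsto_integral_symmetric_shift_primitive[of "{0}" G "\<lambda>x. sinc x * sinc x" "1/2" "-(1/2)" c]
    by simp
qed

lemma abs_integral_sin_sinc_shift_le:
  assumes "\<bar>c\<bar> < T"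
  shows "\<bar>integral {-T..T} (\<lambda>t. sin_sinc (t - c))\<bar> \<le> 2 * \<bar>c\<bar> / (pi * (T - \<bar>c\<bar>))"
proof -
  have continuous: "continuous_on S sin_sinc" for S
    using continuous_on_sin_sinc_compose[OF continuous_on_id] by simp
  have shift: "integral {-T..T} (\<lambda>t. sin_sinc (t - c)) = integral {-T-c..T-c} sin_sinc" for c
    using integral_shift_real_ivl[of "-T-c" "-c" "T-c" sin_sinc] by simp
  have nonneg: "\<bar>integral {-T..T} (\<lambda>t. sin_sinc (t - c))\<bar> \<le> 2 * c / (pi * (T - c))"
    if "0 \<le> c" "c < T" for c
  proof -
    \<comment> \<open>As sin_sinc is odd, only the piece [T - c, T + c] by which the window differs from a
      symmetric one contributes.\<close>
    have "integral {-T-c..T-c} sin_sinc + integral {T-c..T+c} sin_sinc = integral {-T-c..T+c} sin_sinc"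
      using that by (intro Henstock_Kurzweil_Integration.integral_combine
          integrable_continuous_real continuous) auto
    also have "\<dots> = 0"
      using integral_symmetric_odd[of sin_sinc "T + c", OF sin_sinc_minus] by simp
    finally have "integral {-T..T} (\<lambda>t. sin_sinc (t - c)) = - integral {T-c..T+c} sin_sinc"
      by (simp add: shift)
    moreover have "norm (integral {T-c..T+c} sin_sinc) \<le> 1 / (pi * (T - c)) * ((T + c) - (T - c))"
    proof (rule integral_bound)
      fix t assume "t \<in> {T-c..T+c}"
      then have "T - c \<le> t" "0 < T - c" using that by auto
      then have "\<bar>sin_sinc t\<bar> \<le> 1 / (pi * \<bar>t\<bar>)" by (intro abs_sin_sinc_le) auto
      also have "\<dots> \<le> 1 / (pi * (T - c))"
        using \<open>T - c \<le> t\<close> \<open>0 < T - c\<close> by (intro frac_le) auto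
      finally show "norm (sin_sinc t) \<le> 1 / (pi * (T - c))" by simp
    qed (use that continuous in auto)
    ultimately show ?thesis by simp
  qed
  show ?thesis
  proof (cases "0 \<le> c")
    case False
    have "integral {-T..T} (\<lambda>t. sin_sinc (t - c)) = integral {-T..T} (\<lambda>t. - sin_sinc (- t - (- c)))"
      using sin_sinc_minus[of "_ - c"] by simp
    also have "\<dots> = - integral {-T..T} (\<lambda>t. sin_sinc (t - (- c)))"
      using Henstock_Kurzweil_Integration.integral_reflect_real[of T "-T" "\<lambda>t. sin_sinc (t - (- c))"]
      by (simp add: integral_neg)
    finally show ?thesis using nonneg[of "- c"] False assms by simp
  qed (use nonneg assms in simp)
qed

lemma tendsto_integral_sin_sinc_shift:
  "((\<lambda>T. integral {-T..T} (\<lambda>t. sin_sinc (t - c))) \<longlongrightarrow> 0) at_top"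
proof (rule Lim_null_comparison)
  show "\<forall>\<^sub>F T in at_top. norm (integral {-T..T} (\<lambda>t. sin_sinc (t - c))) \<le> 2 * \<bar>c\<bar> / (pi * (T - \<bar>c\<bar>))"
    using eventually_gt_at_top[of "\<bar>c\<bar>"] by eventually_elim (simp add: abs_integral_sin_sinc_shift_le)
qed real_asymp

lemma sinc_mult_sinc_identity:
  "pi * (u - v) * (sinc u * sinc v) =
    cos (pi * (u - v)) * (sin_sinc v - sin_sinc u) + sin (pi * (u - v)) * (sinc (2 * u) + sinc (2 * v))"
proof -
  have "sin (pi * u) = sin (pi * v) * cos (pi * (u - v)) + cos (pi * v) * sin (pi * (u - v))"
    using sin_add[of "pi * v" "pi * (u - v)"] by (simp add: algebra_simps)
  moreover have "sin (pi * v) = sin (pi * u) * cos (pi * (u - v)) - cos (pi * u) * sin (pi * (u - v))"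
    using sin_diff[of "pi * u" "pi * (u - v)"] by (simp add: algebra_simps)
  ultimately show ?thesis
    using sin_pi_eq_sinc[of u] sin_pi_eq_sinc[of v] unfolding sin_sinc_def sinc_double
    by algebra
qed

lemma lborel_integral_sinc_shift_mult: "(\<integral>t. sinc (t - a) * sinc (t - b) \<partial>lborel) = sinc (a - b)"
proof -
  have "((\<lambda>T. integral {-T..T} (\<lambda>t. sinc (t - a) * sinc (t - b))) \<longlongrightarrow> sinc (a - b)) at_top"
  proof (cases "a = b")
    case True
    then show ?thesis using tendsto_integral_sinc_sq_shift[of b] by simp
  next
    case False
    define d where "d = b - a"
    have "d \<noteq> 0" using False by (simp add: d_def)
    define S where "S T c = integral {-T..T} (\<lambda>t. sin_sinc (t - c))" for T c
    define Q where "Q T c = integral {-T..T} (\<lambda>t. sinc (2 * (t - c)))" for T c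
    have integrable: "(\<lambda>t. sin_sinc (t - c)) integrable_on {-T..T}"
      "(\<lambda>t. sinc (2 * (t - c))) integrable_on {-T..T}" for T c
      by (intro integrable_continuous_real continuous_intros)+
    have identity: "sinc (t - a) * sinc (t - b) =
        (cos (pi * d) * (sin_sinc (t - b) - sin_sinc (t - a))
          + sin (pi * d) * (sinc (2 * (t - a)) + sinc (2 * (t - b)))) / (pi * d)" for t
      using sinc_mult_sinc_identity[of "t - a" "t - b"] \<open>d \<noteq> 0\<close>
      by (simp add: d_def nonzero_eq_divide_eq mult.commute)
    have "((\<lambda>t. sinc (t - a) * sinc (t - b)) has_integral
        (cos (pi * d) * (S T b - S T a) + sin (pi * d) * (Q T a + Q T b)) / (pi * d)) {-T..T}" for T
      unfolding identity S_def Q_def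
      by (intro has_integral_divide has_integral_add has_integral_diff has_integral_mult_right
          integrable_integral integrable)
    then have "integral {-T..T} (\<lambda>t. sinc (t - a) * sinc (t - b)) =
        (cos (pi * d) * (S T b - S T a) + sin (pi * d) * (Q T a + Q T b)) / (pi * d)" for T
      by (rule integral_unique)
    moreover have "((\<lambda>T. (cos (pi * d) * (S T b - S T a) + sin (pi * d) * (Q T a + Q T b)) / (pi * d))
        \<longlongrightarrow> (cos (pi * d) * (0 - 0) + sin (pi * d) * (1/2 + 1/2)) / (pi * d)) at_top"
      unfolding S_def Q_def
      using \<open>d \<noteq> 0\<close>
      by (intro tendsto_intros tendsto_integral_sin_sinc_shift tendsto_integral_sinc_double_shift) simp
    moreover have "(cos (pi * d) * (0 - 0) + sin (pi * d) * (1/2 + 1/2)) / (pi * d) = sinc (a - b)"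
      using \<open>d \<noteq> 0\<close> sinc_minus[of "a - b"] by (simp add: sinc_def d_def)
    ultimately show ?thesis by simp
  qed
  then show ?thesis
    using tendsto_unique[OF _ tendsto_integral_symmetric_interval[OF integrable_sinc_shift_mult]]
    by fastforce
qed


section \<open>The Gram form and its spectral representation\<close>

(* For even W this is the Hermitian form sum_{n,m} a_n conj(a_m) W(lam n - lam m). *)
definition gram_form :: "'i set \<Rightarrow> ('i \<Rightarrow> complex) \<Rightarrow> ('i \<Rightarrow> real) \<Rightarrow> (real \<Rightarrow> real) \<Rightarrow> real" where
  "gram_form I a lam W = (\<Sum>n\<in>I. \<Sum>m\<in>I. Re (a n * cnj (a m)) * W (lam n - lam m))"

lemma cmod_sum_mult_of_real_sq:
  "(cmod (\<Sum>n\<in>I. a n * complex_of_real (x n)))\<^sup>2 = (\<Sum>n\<in>I. \<Sum>m\<in>I. Re (a n * cnj (a m)) * (x n * x m))"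
proof -
  let ?z = "\<Sum>n\<in>I. a n * complex_of_real (x n)"
  have "complex_of_real ((cmod ?z)\<^sup>2) = ?z * cnj ?z" by (rule complex_norm_square)
  also have "\<dots> = (\<Sum>n\<in>I. \<Sum>m\<in>I. (a n * complex_of_real (x n)) * cnj (a m * complex_of_real (x m)))"
    by (simp add: cnj_sum sum_product)
  finally have "(cmod ?z)\<^sup>2 =
      Re (\<Sum>n\<in>I. \<Sum>m\<in>I. (a n * complex_of_real (x n)) * cnj (a m * complex_of_real (x m)))"
    by (metis Re_complex_of_real)
  then show ?thesis by (simp add: Re_sum algebra_simps)
qed

lemma energy_sinc_sum:
  assumes "finite I"
  shows "energy (\<lambda>t. \<Sum>n\<in>I. a n * complex_of_real (sinc (t - lam n))) = gram_form I a lam sinc"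
proof -
  have "energy (\<lambda>t. \<Sum>n\<in>I. a n * complex_of_real (sinc (t - lam n)))
      = (\<integral>t. (\<Sum>n\<in>I. \<Sum>m\<in>I. Re (a n * cnj (a m)) * (sinc (t - lam n) * sinc (t - lam m))) \<partial>lborel)"
    unfolding energy_def by (simp only: cmod_sum_mult_of_real_sq)
  also have "\<dots> = gram_form I a lam sinc"
    by (simp add: gram_form_def lborel_integral_sinc_shift_mult integrable_sinc_shift_mult
        Bochner_Integration.integral_sum Bochner_Integration.integrable_sum)
  finally show ?thesis .
qed

lemma gram_form_cos_nonneg: "0 \<le> gram_form I a lam (\<lambda>x. cos (2 * pi * x * \<xi>))"
proof -
  define \<theta> where "\<theta> n = 2 * pi * lam n * \<xi>" for n
  have "cos (2 * pi * (lam n - lam m) * \<xi>) = cos (\<theta> n) * cos (\<theta> m) + sin (\<theta> n) * sin (\<theta> m)" for n m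
    using cos_diff[of "\<theta> n" "\<theta> m"] by (simp add: \<theta>_def algebra_simps)
  then have "gram_form I a lam (\<lambda>x. cos (2 * pi * x * \<xi>)) =
      (cmod (\<Sum>n\<in>I. a n * complex_of_real (cos (\<theta> n))))\<^sup>2 +
      (cmod (\<Sum>n\<in>I. a n * complex_of_real (sin (\<theta> n))))\<^sup>2"
    by (simp add: gram_form_def cmod_sum_mult_of_real_sq distrib_left sum.distrib)
  then show ?thesis by simp
qed

lemma integral_mult_gram_form_cos:
  assumes "finite I" and "continuous_on {\<alpha>..\<beta>} w"
  shows "integral {\<alpha>..\<beta>} (\<lambda>\<xi>. w \<xi> * gram_form I a lam (\<lambda>x. cos (2 * pi * x * \<xi>)))
       = gram_form I a lam (\<lambda>x. integral {\<alpha>..\<beta>} (\<lambda>\<xi>. w \<xi> * cos (2 * pi * x * \<xi>)))"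
proof -
  define c where "c n m = Re (a n * cnj (a m))" for n m
  define g where "g x \<xi> = w \<xi> * cos (2 * pi * x * \<xi>)" for x \<xi>
  have integrable: "g x integrable_on {\<alpha>..\<beta>}" for x
    unfolding g_def by (intro integrable_continuous_real continuous_intros assms(2))
  have "integral {\<alpha>..\<beta>} (\<lambda>\<xi>. w \<xi> * gram_form I a lam (\<lambda>x. cos (2 * pi * x * \<xi>)))
      = integral {\<alpha>..\<beta>} (\<lambda>\<xi>. \<Sum>n\<in>I. \<Sum>m\<in>I. c n m * g (lam n - lam m) \<xi>)"
    unfolding gram_form_def c_def g_def by (simp add: sum_distrib_left mult.left_commute)
  also have "\<dots> = (\<Sum>n\<in>I. integral {\<alpha>..\<beta>} (\<lambda>\<xi>. \<Sum>m\<in>I. c n m * g (lam n - lam m) \<xi>))"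
    by (intro integral_sum assms(1) integrable_sum integrable_on_mult_right integrable)
  also have "\<dots> = (\<Sum>n\<in>I. \<Sum>m\<in>I. integral {\<alpha>..\<beta>} (\<lambda>\<xi>. c n m * g (lam n - lam m) \<xi>))"
    by (intro sum.cong refl integral_sum assms(1) integrable_on_mult_right integrable)
  finally show ?thesis by (simp add: gram_form_def c_def g_def)
qed

lemma integral_cos_mult_cos_symmetric:
  fixes \<alpha> \<beta> B :: real
  assumes "\<alpha> + \<beta> \<noteq> 0" "\<alpha> - \<beta> \<noteq> 0" "0 \<le> B"
  shows "integral {-B..B} (\<lambda>\<xi>. cos (\<alpha> * \<xi>) * cos (\<beta> * \<xi>)) =
    sin ((\<alpha> + \<beta>) * B) / (\<alpha> + \<beta>) + sin ((\<alpha> - \<beta>) * B) / (\<alpha> - \<beta>)"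
proof -
  define F where "F \<xi> = (sin ((\<alpha> + \<beta>) * \<xi>) / (\<alpha> + \<beta>) + sin ((\<alpha> - \<beta>) * \<xi>) / (\<alpha> - \<beta>)) / 2" for \<xi>
  have "((\<lambda>\<xi>. cos (\<alpha> * \<xi>) * cos (\<beta> * \<xi>)) has_integral (F B - F (-B))) {-B..B}"
  proof (rule fundamental_theorem_of_calculus)
    fix x
    have "(F has_real_derivative (cos ((\<alpha> + \<beta>) * x) + cos ((\<alpha> - \<beta>) * x)) / 2) (at x)"
      unfolding F_def[abs_def] using assms(1,2) by (auto intro!: derivative_eq_intros)
    moreover have "(cos ((\<alpha> + \<beta>) * x) + cos ((\<alpha> - \<beta>) * x)) / 2 = cos (\<alpha> * x) * cos (\<beta> * x)"
      by (simp add: distrib_right left_diff_distrib cos_add cos_diff)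
    ultimately show "(F has_vector_derivative cos (\<alpha> * x) * cos (\<beta> * x)) (at x within {-B..B})"
      by (simp add: has_real_derivative_iff_has_vector_derivative has_vector_derivative_at_within)
  qed (use assms in simp)
  moreover have "F (-B) = - F B"
    unfolding F_def mult_minus_right sin_minus by argo
  ultimately have "integral {-B..B} (\<lambda>\<xi>. cos (\<alpha> * \<xi>) * cos (\<beta> * \<xi>)) = 2 * F B"
    by (simp add: integral_unique)
  then show ?thesis unfolding F_def by simp
qed

lemma sinc_eq_integral_cos: "sinc x = integral {-1/2..1/2} (\<lambda>\<xi>. cos (2 * pi * x * \<xi>))"
proof (cases "x = 0")
  case False
  then have "integral {-(1/2)..1/2} (\<lambda>\<xi>. cos (0 * \<xi>) * cos ((2 * pi * x) * \<xi>)) =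
      sin ((0 + 2 * pi * x) * (1/2)) / (0 + 2 * pi * x) + sin ((0 - 2 * pi * x) * (1/2)) / (0 - 2 * pi * x)"
    by (intro integral_cos_mult_cos_symmetric) auto
  with False show ?thesis by (simp add: sinc_def)
qed simp

(* The window cos(pi xi / (2B)) vanishes at the ends of [-B, B]; this is what makes the
   kernel decay like x^-2, unlike sinc itself. *)
definition cos_window_kernel :: "real \<Rightarrow> real \<Rightarrow> real" where
  "cos_window_kernel B x = integral {-B..B} (\<lambda>\<xi>. cos (pi / (2 * B) * \<xi>) * cos (2 * pi * x * \<xi>))"

lemma cos_window_kernel_eq:
  assumes "0 < B" and "\<bar>4 * B * x\<bar> \<noteq> 1"
  shows "cos_window_kernel B x = 4 * B * cos (2 * pi * B * x) / (pi * (1 - 16 * B\<^sup>2 * x\<^sup>2))"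
proof -
  have "1 + 4 * B * x \<noteq> 0" "1 - 4 * B * x \<noteq> 0" using assms(2) by auto
  then have "pi * (1 + 4 * B * x) / (2 * B) \<noteq> 0" "pi * (1 - 4 * B * x) / (2 * B) \<noteq> 0"
    using assms(1) by simp_all
  moreover have "pi / (2 * B) + 2 * pi * x = pi * (1 + 4 * B * x) / (2 * B)"
    "pi / (2 * B) - 2 * pi * x = pi * (1 - 4 * B * x) / (2 * B)"
    using assms(1) by (simp_all add: field_simps)
  ultimately have plus: "pi / (2 * B) + 2 * pi * x = pi * (1 + 4 * B * x) / (2 * B)"
      "pi / (2 * B) + 2 * pi * x \<noteq> 0"
    and minus: "pi / (2 * B) - 2 * pi * x = pi * (1 - 4 * B * x) / (2 * B)"
      "pi / (2 * B) - 2 * pi * x \<noteq> 0"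
    by simp_all
  have "cos_window_kernel B x =
      sin ((pi / (2 * B) + 2 * pi * x) * B) / (pi / (2 * B) + 2 * pi * x) +
      sin ((pi / (2 * B) - 2 * pi * x) * B) / (pi / (2 * B) - 2 * pi * x)"
    unfolding cos_window_kernel_def using plus minus assms(1)
    by (intro integral_cos_mult_cos_symmetric) auto
  also have "\<dots> = cos (2 * pi * B * x) * (2 * B / (pi * (1 + 4 * B * x)) + 2 * B / (pi * (1 - 4 * B * x)))"
  proof -
    have "pi * (1 + 4 * B * x) / (2 * B) * B = pi / 2 + 2 * pi * B * x"
      "pi * (1 - 4 * B * x) / (2 * B) * B = pi / 2 - 2 * pi * B * x"
      using assms(1) by (simp_all add: field_simps)
    then show ?thesis
      unfolding plus(1) minus(1) by (simp add: sin_add sin_diff distrib_left)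
  qed
  also have "2 * B / (pi * (1 + 4 * B * x)) + 2 * B / (pi * (1 - 4 * B * x)) = 4 * B / (pi * (1 - 16 * B\<^sup>2 * x\<^sup>2))"
  proof -
    have "2 * B / (pi * p) + 2 * B / (pi * q) = 2 * B * (p + q) / (pi * (p * q))"
      if "p \<noteq> 0" "q \<noteq> 0" for p q :: real
      using that by (simp add: field_simps)
    moreover have "(1 + 4 * B * x) * (1 - 4 * B * x) = 1 - 16 * B\<^sup>2 * x\<^sup>2"
      by (simp add: algebra_simps power2_eq_square)
    ultimately show ?thesis
      using \<open>1 + 4 * B * x \<noteq> 0\<close> \<open>1 - 4 * B * x \<noteq> 0\<close> by simp
  qed
  finally show ?thesis by simp
qed

lemma cos_window_kernel_zero: "0 < B \<Longrightarrow> cos_window_kernel B 0 = 4 * B / pi"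
  using cos_window_kernel_eq[of B 0] by simp

lemma abs_cos_window_kernel_le:
  assumes "1/2 \<le> B" and "1 \<le> \<bar>x\<bar>"
  shows "\<bar>cos_window_kernel B x\<bar> \<le> 2 / (pi * (4 * x\<^sup>2 - 1))"
proof -
  have "1 \<le> x\<^sup>2" using assms(2) by (metis abs_le_square_iff abs_one one_power2)
  have "1/4 \<le> B\<^sup>2" using assms(1) power_mono[of "1/2" B 2] by (simp add: power2_eq_square)
  then have "1/4 \<le> B\<^sup>2 * x\<^sup>2" using \<open>1 \<le> x\<^sup>2\<close> mult_mono[of "1/4" "B\<^sup>2" 1 "x\<^sup>2"] by simp
  then have pos: "0 < 16 * B\<^sup>2 * x\<^sup>2 - 1" "0 < 4 * x\<^sup>2 - 1" using \<open>1 \<le> x\<^sup>2\<close> by auto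
  have "\<bar>4 * B * x\<bar> \<noteq> 1"
  proof
    assume "\<bar>4 * B * x\<bar> = 1"
    then have "(4 * B * x)\<^sup>2 = 1" by (metis power2_abs one_power2)
    with pos(1) show False by (simp add: power_mult_distrib)
  qed
  then have "\<bar>cos_window_kernel B x\<bar> = 4 * B * \<bar>cos (2 * pi * B * x)\<bar> / (pi * (16 * B\<^sup>2 * x\<^sup>2 - 1))"
    using assms(1) pos(1) by (simp add: cos_window_kernel_eq abs_mult abs_divide algebra_simps)
  also have "\<dots> \<le> 4 * B / (pi * (16 * B\<^sup>2 * x\<^sup>2 - 1))"
    using assms(1) pos(1) by (intro divide_right_mono) (auto simp: mult_le_cancel_left1)
  also have "\<dots> \<le> 2 / (pi * (4 * x\<^sup>2 - 1))"
  proof -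
    have "0 \<le> (2 * B - 1) * (16 * B * x\<^sup>2 + 2)" using assms(1) by simp
    then have "4 * B * (4 * x\<^sup>2 - 1) \<le> 2 * (16 * B\<^sup>2 * x\<^sup>2 - 1)"
      by (simp add: algebra_simps power2_eq_square)
    then show ?thesis using pos by (simp add: divide_simps)
  qed
  finally show ?thesis .
qed

lemma continuous_on_gram_form_cos: "continuous_on S (\<lambda>\<xi>. gram_form I a lam (\<lambda>x. cos (2 * pi * x * \<xi>)))"
  unfolding gram_form_def by (intro continuous_intros)

lemma gram_form_cos_window_half_le_sinc:
  assumes "finite I"
  shows "gram_form I a lam (cos_window_kernel (1/2)) \<le> gram_form I a lam sinc"
proof -
  let ?P = "\<lambda>\<xi>. gram_form I a lam (\<lambda>x. cos (2 * pi * x * \<xi>))"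
  have "gram_form I a lam (cos_window_kernel (1/2)) = integral {-1/2..1/2} (\<lambda>\<xi>. cos (pi * \<xi>) * ?P \<xi>)"
    using integral_mult_gram_form_cos[OF assms, of "-1/2" "1/2" "\<lambda>\<xi>. cos (pi * \<xi>)"]
    by (simp add: cos_window_kernel_def[abs_def] continuous_intros)
  also have "\<dots> \<le> integral {-1/2..1/2} (\<lambda>\<xi>. 1 * ?P \<xi>)"
    by (intro integral_le integrable_continuous_real continuous_intros continuous_on_gram_form_cos
        mult_right_mono gram_form_cos_nonneg) auto
  also have "\<dots> = gram_form I a lam sinc"
    using integral_mult_gram_form_cos[OF assms, of "-1/2" "1/2" "\<lambda>_. 1"]
    by (simp add: sinc_eq_integral_cos[abs_def])
  finally show ?thesis .
qed

lemma cos_pi_half_ge_half: assumes "\<bar>\<xi>\<bar> \<le> 1/2" shows "1/2 \<le> cos (pi / 2 * \<xi>)"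
proof -
  have "\<bar>pi / 2 * \<xi>\<bar> \<le> pi / 3"
    using assms mult_left_mono[OF assms, of "pi / 2"] by (simp add: abs_mult)
  then have "cos (pi / 3) \<le> cos \<bar>pi / 2 * \<xi>\<bar>"
    by (intro cos_monotone_0_pi_le) auto
  then show ?thesis by (simp only: cos_abs_real cos_60)
qed

lemma cos_pi_half_nonneg: assumes "\<bar>\<xi>\<bar> \<le> 1" shows "0 \<le> cos (pi / 2 * \<xi>)"
proof -
  have "\<bar>pi / 2 * \<xi>\<bar> \<le> pi / 2"
    using mult_left_mono[OF assms, of "pi / 2"] by (simp add: abs_mult)
  then show ?thesis by (intro cos_ge_zero) (auto simp: abs_le_iff)
qed

lemma gram_form_sinc_le_cos_window_one:
  assumes "finite I"
  shows "gram_form I a lam sinc \<le> 2 * gram_form I a lam (cos_window_kernel 1)"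
proof -
  let ?P = "\<lambda>\<xi>. gram_form I a lam (\<lambda>x. cos (2 * pi * x * \<xi>))"
  have continuous: "continuous_on S (\<lambda>\<xi>. 2 * (cos (pi / 2 * \<xi>) * ?P \<xi>))" for S
    by (intro continuous_intros continuous_on_gram_form_cos)
  have "gram_form I a lam sinc = integral {-1/2..1/2} (\<lambda>\<xi>. 1 * ?P \<xi>)"
    using integral_mult_gram_form_cos[OF assms, of "-1/2" "1/2" "\<lambda>_. 1"]
    by (simp add: sinc_eq_integral_cos[abs_def])
  also have "\<dots> \<le> integral {-1/2..1/2} (\<lambda>\<xi>. 2 * (cos (pi / 2 * \<xi>) * ?P \<xi>))"
  proof (intro integral_le integrable_continuous_real continuous)
    show "continuous_on {-1/2..1/2} (\<lambda>\<xi>. 1 * ?P \<xi>)"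
      by (intro continuous_intros continuous_on_gram_form_cos)
    fix \<xi> :: real assume "\<xi> \<in> {-1/2..1/2}"
    then have "\<bar>\<xi>\<bar> \<le> 1/2" by auto
    then have window: "1 \<le> 2 * cos (pi / 2 * \<xi>)" using cos_pi_half_ge_half by fastforce
    then show "1 * ?P \<xi> \<le> 2 * (cos (pi / 2 * \<xi>) * ?P \<xi>)"
      using mult_right_mono[OF window gram_form_cos_nonneg[of I a lam \<xi>]] by (simp only: mult.assoc)
  qed
  also have "\<dots> \<le> integral {-1..1} (\<lambda>\<xi>. 2 * (cos (pi / 2 * \<xi>) * ?P \<xi>))"
    using cos_pi_half_nonneg gram_form_cos_nonneg
    by (intro integral_subset_le integrable_continuous_real continuous)
       (auto simp: abs_le_iff intro!: mult_nonneg_nonneg)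
  also have "\<dots> = 2 * gram_form I a lam (cos_window_kernel 1)"
    using integral_mult_gram_form_cos[OF assms, of "-1" 1 "\<lambda>\<xi>. cos (pi / 2 * \<xi>)"]
    by (simp add: cos_window_kernel_def[abs_def] continuous_intros)
  finally show ?thesis .
qed


section \<open>Separated frequencies\<close>

lemma separated_card_mult_le_Max:
  fixes D :: "real set"
  assumes "finite D" "D \<noteq> {}" "\<forall>x\<in>D. g \<le> x" "\<forall>x\<in>D. \<forall>y\<in>D. x \<noteq> y \<longrightarrow> g \<le> \<bar>x - y\<bar>"
  shows "real (card D) * g \<le> Max D"
  using assms
proof (induction D rule: finite_ranking_induct[where f = "\<lambda>x. x"])
  case (insert x S)
  show ?case
  proof (cases "S = {}")
    case False
    show ?thesis
    proof (cases "x \<in> S")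
      case True
      then show ?thesis using insert.IH insert.prems \<open>S \<noteq> {}\<close> by (simp add: insert_absorb)
    next
      case False
      have "Max S \<in> S" using insert.hyps(1) \<open>S \<noteq> {}\<close> by simp
      then have "g \<le> x - Max S"
        using insert.hyps(2) insert.prems(3) \<open>x \<notin> S\<close> by fastforce
      moreover have "real (card S) * g \<le> Max S"
        using insert.IH insert.prems \<open>S \<noteq> {}\<close> by auto
      moreover have "Max (insert x S) = x"
        using insert.hyps \<open>S \<noteq> {}\<close> by (auto intro!: Max_eqI)
      ultimately show ?thesis
        using insert.hyps(1) \<open>x \<notin> S\<close> by (simp add: distrib_right)
    qed
  qed (use insert.prems in simp)
qed simp

lemma sum_inverse_separated_le:
  fixes D :: "real set"
  assumes "1 \<le> g" "finite D" "\<forall>x\<in>D. g \<le> x" "\<forall>x\<in>D. \<forall>y\<in>D. x \<noteq> y \<longrightarrow> g \<le> \<bar>x - y\<bar>"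
  shows "(\<Sum>x\<in>D. 1 / (4 * x\<^sup>2 - 1)) \<le> (1 - 1 / (2 * card D + 1)) / (2 * g\<^sup>2)"
  using assms(2-)
proof (induction D rule: finite_ranking_induct[where f = "\<lambda>x. x"])
  case (insert x S)
  show ?case
  proof (cases "x \<in> S")
    case True
    with insert show ?thesis by (simp add: insert_absorb)
  next
    case False
    define N where "N = real (card S) + 1"
    have "N * g \<le> x"
      using separated_card_mult_le_Max[of "insert x S" g] insert False
      by (simp add: N_def Max_insert2 add.commute)
    have "1 \<le> N" by (simp add: N_def)
    have "1 \<le> N\<^sup>2" using \<open>1 \<le> N\<close> by (simp add: one_le_power)
    then have "0 < g\<^sup>2 * (4 * N\<^sup>2 - 1)" using assms(1) by (intro mult_pos_pos) auto
    moreover have "g\<^sup>2 * (4 * N\<^sup>2 - 1) \<le> 4 * x\<^sup>2 - 1"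
    proof -
      have "(N * g)\<^sup>2 \<le> x\<^sup>2"
        using \<open>N * g \<le> x\<close> \<open>1 \<le> N\<close> assms(1) by (intro power_mono) auto
      moreover have "1 \<le> g\<^sup>2" using assms(1) by (simp add: one_le_power)
      ultimately show ?thesis by (simp add: power_mult_distrib algebra_simps)
    qed
    ultimately have "1 / (4 * x\<^sup>2 - 1) \<le> 1 / (g\<^sup>2 * (4 * N\<^sup>2 - 1))"
      by (intro frac_le) auto
    moreover have "(\<Sum>y\<in>S. 1 / (4 * y\<^sup>2 - 1)) \<le> (1 - 1 / (2 * N - 1)) / (2 * g\<^sup>2)"
      using insert.IH insert.prems by (simp add: N_def)
    moreover have "1 / (g\<^sup>2 * (4 * N\<^sup>2 - 1)) + (1 - 1 / (2 * N - 1)) / (2 * g\<^sup>2)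
        = (1 - 1 / (2 * N + 1)) / (2 * g\<^sup>2)"
    proof -
      have telescope: "1 / (G * (p * (p + 2))) + (1 - 1 / p) / (2 * G) = (1 - 1 / (p + 2)) / (2 * G)"
        if "0 < G" "0 < p" for p G :: real
        using that by (simp add: divide_simps) (simp add: algebra_simps)
      have "4 * N\<^sup>2 - 1 = (2 * N - 1) * ((2 * N - 1) + 2)"
        by (simp add: algebra_simps power2_eq_square)
      moreover have "0 < g\<^sup>2" "0 < 2 * N - 1" using \<open>1 \<le> N\<close> assms(1) by auto
      ultimately show ?thesis
        using telescope[of "g\<^sup>2" "2 * N - 1"] by (simp add: add.commute)
    qed
    ultimately show ?thesis
      using insert.hyps(1) False by (simp add: N_def)
  qed
qed simp

lemma sum_separated_one_side_le:
  fixes lam :: "'i \<Rightarrow> real"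
  assumes "1 \<le> g" "finite A"
    and "\<forall>n\<in>A. \<forall>m\<in>A. n \<noteq> m \<longrightarrow> g \<le> \<bar>lam n - lam m\<bar>"
    and "\<forall>m\<in>A. g \<le> lam m - c"
  shows "(\<Sum>m\<in>A. 1 / (4 * (lam m - c)\<^sup>2 - 1)) \<le> 1 / (2 * g\<^sup>2)"
proof -
  have "inj_on (\<lambda>m. lam m - c) A"
    using assms(1,3) by (intro inj_onI) force
  then have "(\<Sum>m\<in>A. 1 / (4 * (lam m - c)\<^sup>2 - 1)) = (\<Sum>x\<in>(\<lambda>m. lam m - c) ` A. 1 / (4 * x\<^sup>2 - 1))"
    by (simp add: sum.reindex)
  also have "\<dots> \<le> (1 - 1 / (2 * card ((\<lambda>m. lam m - c) ` A) + 1)) / (2 * g\<^sup>2)"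
    using assms by (intro sum_inverse_separated_le) auto
  also have "\<dots> \<le> 1 / (2 * g\<^sup>2)"
    by (intro divide_right_mono) auto
  finally show ?thesis .
qed

lemma sum_separated_offdiagonal_le:
  fixes lam :: "'i \<Rightarrow> real"
  assumes "1 \<le> g" "finite I" "n \<in> I"
    and sep: "\<forall>n\<in>I. \<forall>m\<in>I. n \<noteq> m \<longrightarrow> g \<le> \<bar>lam n - lam m\<bar>"
  shows "(\<Sum>m\<in>I - {n}. 1 / (4 * (lam n - lam m)\<^sup>2 - 1)) \<le> 1 / g\<^sup>2"
proof -
  define R where "R = {m \<in> I - {n}. lam n < lam m}"
  define L where "L = {m \<in> I - {n}. lam m < lam n}"
  have "lam m \<noteq> lam n" if "m \<in> I - {n}" for m
    using sep assms(1,3) that by fastforce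
  then have "I - {n} = R \<union> L" by (fastforce simp: R_def L_def neq_iff)
  moreover have "R \<inter> L = {}" "finite R" "finite L"
    using assms(2) by (auto simp: R_def L_def)
  moreover have "(\<Sum>m\<in>R. 1 / (4 * (lam m - lam n)\<^sup>2 - 1)) \<le> 1 / (2 * g\<^sup>2)"
    using assms sep by (intro sum_separated_one_side_le) (force simp: R_def)+
  moreover have "(\<Sum>m\<in>L. 1 / (4 * (- lam m - (- lam n))\<^sup>2 - 1)) \<le> 1 / (2 * g\<^sup>2)"
    using assms sep by (intro sum_separated_one_side_le) (force simp: L_def abs_minus_commute)+
  ultimately show ?thesis
    by (simp add: sum.union_disjoint power2_commute[of "lam n"])
qed

lemma schur_test:
  fixes k :: "'i \<Rightarrow> 'i \<Rightarrow> real" and x :: "'i \<Rightarrow> real"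
  assumes "finite I"
    and k_nonneg: "\<And>n m. n \<in> I \<Longrightarrow> m \<in> I \<Longrightarrow> 0 \<le> k n m"
    and k_sym: "\<And>n m. n \<in> I \<Longrightarrow> m \<in> I \<Longrightarrow> k n m = k m n"
    and row_sum: "\<And>n. n \<in> I \<Longrightarrow> (\<Sum>m\<in>I. k n m) \<le> B"
  shows "(\<Sum>n\<in>I. \<Sum>m\<in>I. x n * x m * k n m) \<le> B * (\<Sum>n\<in>I. (x n)\<^sup>2)"
proof -
  have "(\<Sum>n\<in>I. \<Sum>m\<in>I. x n * x m * k n m) \<le> (\<Sum>n\<in>I. \<Sum>m\<in>I. ((x n)\<^sup>2 / 2 + (x m)\<^sup>2 / 2) * k n m)"
    using sum_squares_bound by (intro sum_mono mult_right_mono k_nonneg) (auto simp: field_simps)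
  also have "\<dots> = (\<Sum>n\<in>I. \<Sum>m\<in>I. (x n)\<^sup>2 / 2 * k n m) + (\<Sum>n\<in>I. \<Sum>m\<in>I. (x m)\<^sup>2 / 2 * k m n)"
    by (simp add: distrib_right sum.distrib k_sym cong: sum.cong)
  also have "\<dots> = (\<Sum>n\<in>I. (x n)\<^sup>2 * (\<Sum>m\<in>I. k n m))"
    by (subst (2) sum.swap) (simp add: sum_distrib_left sum_distrib_right mult.commute flip: sum.distrib)
  also have "\<dots> \<le> (\<Sum>n\<in>I. (x n)\<^sup>2 * B)"
    by (intro sum_mono mult_left_mono row_sum) auto
  finally show ?thesis by (simp add: sum_distrib_left mult.commute)
qed

lemma gram_form_diagonal_deviation:
  fixes lam :: "'i \<Rightarrow> real" and W :: "real \<Rightarrow> real"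
  assumes "1 \<le> g" "finite I"
    and sep: "\<forall>n\<in>I. \<forall>m\<in>I. n \<noteq> m \<longrightarrow> g \<le> \<bar>lam n - lam m\<bar>"
    and "0 \<le> C" and decay: "\<And>x. 1 \<le> \<bar>x\<bar> \<Longrightarrow> \<bar>W x\<bar> \<le> C / (4 * x\<^sup>2 - 1)"
  shows "\<bar>gram_form I a lam W - W 0 * (\<Sum>n\<in>I. (cmod (a n))\<^sup>2)\<bar> \<le> C / g\<^sup>2 * (\<Sum>n\<in>I. (cmod (a n))\<^sup>2)"
proof -
  define c where "c n m = Re (a n * cnj (a m))" for n m
  define k where "k n m = (if n = m then 0 else C / (4 * (lam n - lam m)\<^sup>2 - 1))" for n m
  define E where "E = (\<Sum>n\<in>I. \<Sum>m\<in>I - {n}. c n m * W (lam n - lam m))"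
  have separated: "1 \<le> \<bar>lam n - lam m\<bar>" if "n \<in> I" "m \<in> I" "n \<noteq> m" for n m
    using sep assms(1) that by force
  have "c n n = (cmod (a n))\<^sup>2" for n
    using complex_norm_square[of "a n"] unfolding c_def by (metis Re_complex_of_real)
  then have "gram_form I a lam W = W 0 * (\<Sum>n\<in>I. (cmod (a n))\<^sup>2) + E"
    using assms(2)
    by (simp add: gram_form_def E_def c_def sum.remove sum.distrib sum_distrib_left mult.commute)
  moreover have "\<bar>E\<bar> \<le> (\<Sum>n\<in>I. \<Sum>m\<in>I. cmod (a n) * cmod (a m) * k n m)"
  proof -
    have "\<bar>E\<bar> \<le> (\<Sum>n\<in>I. \<Sum>m\<in>I - {n}. \<bar>c n m\<bar> * \<bar>W (lam n - lam m)\<bar>)"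
      unfolding E_def by (rule order_trans[OF sum_abs sum_mono[OF order_trans[OF sum_abs]]]) (simp add: abs_mult)
    also have "\<dots> \<le> (\<Sum>n\<in>I. \<Sum>m\<in>I - {n}. cmod (a n) * cmod (a m) * k n m)"
    proof (intro sum_mono mult_mono)
      fix n m assume "n \<in> I" "m \<in> I - {n}"
      then show "\<bar>W (lam n - lam m)\<bar> \<le> k n m"
        using decay separated by (auto simp: k_def)
      show "\<bar>c n m\<bar> \<le> cmod (a n) * cmod (a m)"
        using abs_Re_le_cmod[of "a n * cnj (a m)"] by (simp add: c_def norm_mult)
    qed auto
    also have "\<dots> = (\<Sum>n\<in>I. \<Sum>m\<in>I. cmod (a n) * cmod (a m) * k n m)"
      by (rule sum.cong[OF refl]) (use assms(2) in \<open>simp add: sum_diff1 k_def\<close>)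
    finally show ?thesis .
  qed
  moreover have "(\<Sum>n\<in>I. \<Sum>m\<in>I. cmod (a n) * cmod (a m) * k n m) \<le> C / g\<^sup>2 * (\<Sum>n\<in>I. (cmod (a n))\<^sup>2)"
  proof (rule schur_test[OF assms(2)])
    fix n m assume "n \<in> I" "m \<in> I"
    show "0 \<le> k n m"
    proof (cases "n = m")
      case False
      then have "1 \<le> (lam n - lam m)\<^sup>2"
        using separated[OF \<open>n \<in> I\<close> \<open>m \<in> I\<close>] by (metis abs_le_square_iff abs_one one_power2)
      with False show ?thesis using assms(4) by (simp add: k_def)
    qed (simp add: k_def)
    show "k n m = k m n" by (simp add: k_def power2_commute)
  next
    fix n assume "n \<in> I"
    have "(\<Sum>m\<in>I. k n m) = (\<Sum>m\<in>I - {n}. k n m)"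
      using assms(2) \<open>n \<in> I\<close> by (simp add: sum_diff1 k_def)
    also have "\<dots> = C * (\<Sum>m\<in>I - {n}. 1 / (4 * (lam n - lam m)\<^sup>2 - 1))"
      unfolding sum_distrib_left by (rule sum.cong) (auto simp: k_def)
    also have "\<dots> \<le> C * (1 / g\<^sup>2)"
      using assms \<open>n \<in> I\<close> by (intro mult_left_mono sum_separated_offdiagonal_le) auto
    finally show "(\<Sum>m\<in>I. k n m) \<le> C / g\<^sup>2" by simp
  qed
  ultimately show ?thesis by simp
qed

section \<open>Riesz bounds\<close>

lemma energy_sinc_sum_bounds:
  fixes lam :: "'i \<Rightarrow> real" and a :: "'i \<Rightarrow> complex"
  assumes "1 \<le> \<gamma>" "finite I"
    and sep: "\<forall>n\<in>I. \<forall>m\<in>I. n \<noteq> m \<longrightarrow> \<gamma> \<le> \<bar>lam n - lam m\<bar>"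
  defines "f \<equiv> \<lambda>t. \<Sum>n\<in>I. a n * complex_of_real (sinc (t - lam n))"
    and "S \<equiv> \<Sum>n\<in>I. (cmod (a n))\<^sup>2"
  shows "(2 / pi - 2 / (pi * \<gamma>\<^sup>2)) * S \<le> energy f"
    and "energy f \<le> (8 / pi + 4 / (pi * \<gamma>\<^sup>2)) * S"
proof -
  have deviation: "\<bar>gram_form I a lam (cos_window_kernel B) - 4 * B / pi * S\<bar> \<le> 2 / (pi * \<gamma>\<^sup>2) * S"
    if "1/2 \<le> B" for B
    using gram_form_diagonal_deviation[OF assms(1-3), of "2 / pi" "cos_window_kernel B"] that
    by (simp add: S_def cos_window_kernel_zero abs_cos_window_kernel_le)
  have energy: "energy f = gram_form I a lam sinc"
    unfolding f_def by (rule energy_sinc_sum[OF assms(2)])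
  have "(2 / pi - 2 / (pi * \<gamma>\<^sup>2)) * S \<le> gram_form I a lam (cos_window_kernel (1/2))"
    using deviation[of "1/2"] by (simp add: field_simps)
  also have "\<dots> \<le> energy f"
    unfolding energy by (rule gram_form_cos_window_half_le_sinc[OF assms(2)])
  finally show "(2 / pi - 2 / (pi * \<gamma>\<^sup>2)) * S \<le> energy f" .
  have "energy f \<le> 2 * gram_form I a lam (cos_window_kernel 1)"
    unfolding energy by (rule gram_form_sinc_le_cos_window_one[OF assms(2)])
  also have "\<dots> \<le> 2 * (4 / pi * S + 2 / (pi * \<gamma>\<^sup>2) * S)"
    using deviation[of 1] by simp
  also have "\<dots> = (8 / pi + 4 / (pi * \<gamma>\<^sup>2)) * S"
    by (simp add: field_simps)
  finally show "energy f \<le> (8 / pi + 4 / (pi * \<gamma>\<^sup>2)) * S" .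
qed

theorem corollary1:
  fixes \<gamma> :: real
  assumes "\<gamma> > sqrt (1/3 + pi\<^sup>2/12)"
  shows "\<exists>c1 c2. c1 > 0 \<and> c2 > 0 \<and>
    (\<forall>(R::nat) (lam::nat \<Rightarrow> real) (a::nat \<Rightarrow> complex).
       (\<forall>n\<in>{1..R}. \<forall>m\<in>{1..R}. n \<noteq> m \<longrightarrow> \<bar>lam n - lam m\<bar> \<ge> \<gamma>) \<longrightarrow>
       (let f = (\<lambda>t. \<Sum>n\<in>{1..R}. a n * complex_of_real (sinc (t - lam n))) in
         c1 * (\<Sum>n\<in>{1..R}. (cmod (a n))\<^sup>2) \<le> energy f \<and>
         energy f \<le> c2 * (\<Sum>n\<in>{1..R}. (cmod (a n))\<^sup>2)))"
proof -
  have "9 < pi\<^sup>2" using pi_gt3 power_strict_mono[of 3 pi 2] by simp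
  then have "1 < sqrt (1/3 + pi\<^sup>2/12)" by simp
  then have "1 < \<gamma>" using assms by linarith
  define c1 where "c1 = 2 / pi - 2 / (pi * \<gamma>\<^sup>2)"
  define c2 where "c2 = 8 / pi + 4 / (pi * \<gamma>\<^sup>2)"
  have "2 / (pi * \<gamma>\<^sup>2) < 2 / pi"
    using \<open>1 < \<gamma>\<close> by (simp add: divide_strict_left_mono one_less_power)
  then have "0 < c1" by (simp add: c1_def)
  have "0 < c2" unfolding c2_def using \<open>1 < \<gamma>\<close> by (intro add_pos_pos divide_pos_pos) auto
  show ?thesis
  proof (rule exI[of _ c1], rule exI[of _ c2], intro conjI allI impI)
    fix R :: nat and lam :: "nat \<Rightarrow> real" and a :: "nat \<Rightarrow> complex"
    assume "\<forall>n\<in>{1..R}. \<forall>m\<in>{1..R}. n \<noteq> m \<longrightarrow> \<bar>lam n - lam m\<bar> \<ge> \<gamma>"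
    then show "let f = (\<lambda>t. \<Sum>n\<in>{1..R}. a n * complex_of_real (sinc (t - lam n))) in
         c1 * (\<Sum>n\<in>{1..R}. (cmod (a n))\<^sup>2) \<le> energy f \<and>
         energy f \<le> c2 * (\<Sum>n\<in>{1..R}. (cmod (a n))\<^sup>2)"
      using energy_sinc_sum_bounds[of \<gamma> "{1..R}" lam a] \<open>1 < \<gamma>\<close>
      by (simp add: c1_def c2_def Let_def)
  qed fact+
qed

end
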